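(* Let $G=(V,E)$ be a finite undirected graph, let $k>2$ be an integer, let $m=\lfloor k/2\rfloor$, let $C$ be a legitimate configuration (as defined in the context), and let $s\in S(C)$. Let $u\in V$ with $\mathrm{dist}(u,s)\le m-1$. Then every shortest path $(s=s_0,s_1,\dots,s_{d_u}=u)$ from $s$ to $u$ satisfies the following in $C$: for every clock index $i\in\{d_u+1,\dots,m-1\}$ there exists an integer $a\in\{0,\dots,d_u\}$ such that 1. for all $\ell\in\{0,\dots,a\}$, $(b_{i,s_\ell},c_{i,s_\ell})=(\downarrow,c_{i,s})$; 2. there exists $c'\in\{c_{i,s}-1,c_{i,s}\}$ such that for all $\ell\in\{a+1,\dots,d_u\}$, $(b_{i,s_\ell},c_{i,s_\ell})=(\uparrow,c')$.
   Context: $\mathrm{dist}$ is the graph distance in $G$ and $N(u)$ the neighbourhood of $u$. A configuration $C$ assigns to each node $u$ the values $d_u\in\{0,\dots,k-1\}$, $err_u\in\{0,1\}$, and for each $i\in\{1,\dots,m-1\}$ a clock value $c_{i,u}\in\mathbb{Z}/4\mathbb{Z}$ and an arrow $b_{i,u}\in\{\uparrow,\downarrow\}$. Let $S(C)=\{u\in V: d_u=0\}$. Clock arithmetic is in $\mathbb{Z}/4\mathbb{Z}$. Predicates on a node $u$: - $\mathrm{well\_defined}(u)$: $err_u=0$, $|d_u-d_v|\le 1$ for all $v\in N(u)$, and if $d_u>0$ then some $v\in N(u)$ has $d_v=d_u-1$. - $\mathrm{leader\_down}(u)$: if $d_u=0$ then $b_{i,u}=\downarrow$ for all $i\in\{1,\dots,m-1\}$.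 - $\mathrm{bc\_up}(u,i)$: for every $v\in N(u)$ with $d_v=d_u-1$, $(b_{i,u},b_{i,v},c_{i,v})\in\{(\uparrow,\uparrow,c_{i,u}),(\uparrow,\downarrow,c_{i,u}),(\uparrow,\downarrow,c_{i,u}+1),(\downarrow,\downarrow,c_{i,u})\}$. - $\mathrm{bc\_down}(u,i)$: for every $v\in N(u)$ with $d_v=d_u+1$, $(b_{i,u},b_{i,v},c_{i,v})\in\{(\uparrow,\uparrow,c_{i,u}),(\downarrow,\uparrow,c_{i,u}),(\downarrow,\uparrow,c_{i,u}-1),(\downarrow,\downarrow,c_{i,u})\}$. - $\mathrm{branch\_coherence}(u)$: either $d_u\ge m$, or ($\mathrm{bc\_up}(u,d_u)$ holds, and $\mathrm{bc\_up}(u,i)$ and $\mathrm{bc\_down}(u,i)$ hold for all $i\in\{d_u+1,\dots,m-1\}$). (For $d_u=0$ the condition $\mathrm{bc\_up}(u,0)$ is vacuous.) A configuration $C$ is legitimate if every node $u$ satisfies $\mathrm{well\_defined}(u)$, $\mathrm{leader\_down}(u)$ and $\mathrm{branch\_coherence}(u)$, and any two distinct nodes of $S(C)$ are at distance at least $k$ in $G$. *)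

theory Defs
  imports Main "HOL-Library.Extended_Nat" "HOL-Library.Numeral_Type"
begin

definition undirected_graph :: "'v set \<Rightarrow> ('v \<Rightarrow> 'v \<Rightarrow> bool) \<Rightarrow> bool" where
  "undirected_graph V E \<longleftrightarrow> finite V \<and> (\<forall>u v. E u v \<longrightarrow> u \<in> V \<and> v \<in> V)
     \<and> (\<forall>u v. E u v \<longrightarrow> E v u) \<and> (\<forall>u. \<not> E u u)"

definition nbhd :: "'v set \<Rightarrow> ('v \<Rightarrow> 'v \<Rightarrow> bool) \<Rightarrow> 'v \<Rightarrow> 'v set" where
  "nbhd V E u = {v \<in> V. E u v}"

definition is_walk :: "'v set \<Rightarrow> ('v \<Rightarrow> 'v \<Rightarrow> bool) \<Rightarrow> (nat \<Rightarrow> 'v) \<Rightarrow> nat \<Rightarrow> bool" where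
  "is_walk V E p n \<longleftrightarrow> (\<forall>i\<le>n. p i \<in> V) \<and> (\<forall>i<n. E (p i) (p (Suc i)))"

definition gdist :: "'v set \<Rightarrow> ('v \<Rightarrow> 'v \<Rightarrow> bool) \<Rightarrow> 'v \<Rightarrow> 'v \<Rightarrow> enat" where
  "gdist V E u v =
     (if \<exists>n p. is_walk V E p n \<and> p 0 = u \<and> p n = v
      then enat (LEAST n. \<exists>p. is_walk V E p n \<and> p 0 = u \<and> p n = v) else \<infinity>)"

datatype arrow = Up | Down

text \<open>Configuration: d :: 'v \<Rightarrow> nat, err :: 'v \<Rightarrow> bool (True = 1),
  clocks c i u :: 4 (= Z/4Z), arrows b i u.\<close>

definition well_defined where
  "well_defined V E (d :: 'v \<Rightarrow> nat) (err :: 'v \<Rightarrow> bool) u \<longleftrightarrow>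
     \<not> err u \<and> (\<forall>v\<in>nbhd V E u. \<bar>int (d u) - int (d v)\<bar> \<le> 1)
     \<and> (d u > 0 \<longrightarrow> (\<exists>v\<in>nbhd V E u. d v = d u - 1))"

definition leader_down where
  "leader_down (m::nat) (d :: 'v \<Rightarrow> nat) (b :: nat \<Rightarrow> 'v \<Rightarrow> arrow) u \<longleftrightarrow>
     (d u = 0 \<longrightarrow> (\<forall>i\<in>{1..m-1}. b i u = Down))"

definition bc_up where
  "bc_up V E (d :: 'v \<Rightarrow> nat) (c :: nat \<Rightarrow> 'v \<Rightarrow> 4) b u i \<longleftrightarrow>
     (\<forall>v\<in>nbhd V E u. int (d v) = int (d u) - 1 \<longrightarrow>
        (b i u, b i v, c i v) \<in> {(Up, Up, c i u), (Up, Down, c i u), (Up, Down, c i u + 1),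
                                  (Down, Down, c i u)})"

definition bc_down where
  "bc_down V E (d :: 'v \<Rightarrow> nat) (c :: nat \<Rightarrow> 'v \<Rightarrow> 4) b u i \<longleftrightarrow>
     (\<forall>v\<in>nbhd V E u. d v = d u + 1 \<longrightarrow>
        (b i u, b i v, c i v) \<in> {(Up, Up, c i u), (Down, Up, c i u), (Down, Up, c i u - 1),
                                  (Down, Down, c i u)})"

definition branch_coherence where
  "branch_coherence V E (m::nat) d c b u \<longleftrightarrow>
     d u \<ge> m \<or> (bc_up V E d c b u (d u) \<and>
        (\<forall>i\<in>{d u + 1..m - 1}. bc_up V E d c b u i \<and> bc_down V E d c b u i))"

definition leaders :: "'v set \<Rightarrow> ('v \<Rightarrow> nat) \<Rightarrow> 'v set" where
  "leaders V d = {u \<in> V. d u = 0}"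

definition legitimate where
  "legitimate V E (k::nat) d err c b \<longleftrightarrow>
     (\<forall>u\<in>V. d u < k \<and> well_defined V E d err u \<and> leader_down (k div 2) d b u
        \<and> branch_coherence V E (k div 2) d c b u)
     \<and> (\<forall>s\<in>leaders V d. \<forall>t\<in>leaders V d. s \<noteq> t \<longrightarrow> gdist V E s t \<ge> enat k)"

end

theory Submission
  imports Defs
begin

(* Along a shortest path from a leader s of length L < k/2 the distance label grows by exactly
   one per edge.  It grows by at most one per edge, and from a node whose label were too small
   one could descend to a leader that is either s itself (yielding a shorter path) or another
   leader at distance less than k from s.  So each path node is the parent of the next one, and
   bc_up for a clock i above the labels lets the arrows switch only once, from Down to Up, with
   the clock dropping by at most one at the switch. *)

definition has_walk :: "'v set \<Rightarrow> ('v \<Rightarrow> 'v \<Rightarrow> bool) \<Rightarrow> nat \<Rightarrow> 'v \<Rightarrow> 'v \<Rightarrow> bool" where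
  "has_walk V E n x y \<longleftrightarrow> (\<exists>q. is_walk V E q n \<and> q 0 = x \<and> q n = y)"

lemma has_walk_edge:
  assumes "E x y" "x \<in> V" "y \<in> V"
  shows "has_walk V E 1 x y"
  unfolding has_walk_def is_walk_def
  using assms by (intro exI[of _ "\<lambda>i. if i = 0 then x else y"]) (auto simp: le_Suc_eq)

lemma has_walk_subwalk:
  assumes "is_walk V E p n" "i \<le> j" "j \<le> n"
  shows "has_walk V E (j - i) (p i) (p j)"
  unfolding has_walk_def
  using assms by (intro exI[of _ "\<lambda>t. p (t + i)"]) (auto simp: is_walk_def)

lemma has_walk_append:
  assumes "has_walk V E n1 x y" "has_walk V E n2 y z"
  shows "has_walk V E (n1 + n2) x z"
proof -
  obtain q1 q2 where q1: "is_walk V E q1 n1" "q1 0 = x" "q1 n1 = y"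
    and q2: "is_walk V E q2 n2" "q2 0 = y" "q2 n2 = z"
    using assms unfolding has_walk_def by blast
  let ?q = "\<lambda>i. if i \<le> n1 then q1 i else q2 (i - n1)"
  have "is_walk V E ?q (n1 + n2)"
    unfolding is_walk_def
  proof (intro conjI allI impI)
    fix i assume "i \<le> n1 + n2"
    then show "?q i \<in> V" using q1 q2 unfolding is_walk_def by auto
  next
    fix i assume i: "i < n1 + n2"
    consider "i < n1" | "i = n1" | "n1 < i" by linarith
    then show "E (?q i) (?q (Suc i))"
    proof cases
      case 3
      then have "Suc i - n1 = Suc (i - n1)" "i - n1 < n2" using i by auto
      then show ?thesis using 3 q2 unfolding is_walk_def by auto
    qed (use q1 q2 i in \<open>auto simp: is_walk_def\<close>)
  qed
  moreover have "?q (n1 + n2) = z" using q1 q2 by (cases n2) auto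
  ultimately show ?thesis using q1 unfolding has_walk_def by auto
qed

lemma has_walk_sym:
  assumes sym: "\<forall>x y. E x y \<longrightarrow> E y x" and "has_walk V E n x y"
  shows "has_walk V E n y x"
proof -
  obtain q where q: "is_walk V E q n" "q 0 = x" "q n = y"
    using assms(2) unfolding has_walk_def by blast
  have "is_walk V E (\<lambda>i. q (n - i)) n"
    unfolding is_walk_def
  proof (intro conjI allI impI)
    fix i assume "i \<le> n"
    then show "q (n - i) \<in> V" using q unfolding is_walk_def by auto
  next
    fix i assume i: "i < n"
    then have "E (q (n - Suc i)) (q (Suc (n - Suc i)))" using q unfolding is_walk_def by auto
    moreover have "Suc (n - Suc i) = n - i" using i by auto
    ultimately have "E (q (n - Suc i)) (q (n - i))" by simp
    then show "E (q (n - i)) (q (n - Suc i))" using sym by blast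
  qed
  then show ?thesis using q unfolding has_walk_def by auto
qed

lemma gdist_le_has_walk:
  assumes "has_walk V E n x y"
  shows "gdist V E x y \<le> enat n"
proof -
  have "(LEAST n. has_walk V E n x y) \<le> n" using assms by (rule Least_le)
  then show ?thesis using assms unfolding gdist_def has_walk_def by auto
qed

lemma has_walk_gdist:
  assumes "gdist V E x y = enat n"
  shows "has_walk V E n x y"
proof -
  have ex: "\<exists>n. has_walk V E n x y" and n: "n = (LEAST n. has_walk V E n x y)"
    using assms unfolding gdist_def has_walk_def by (auto split: if_splits)
  show ?thesis unfolding n using ex by (rule LeastI_ex)
qed

lemma gdist_sym:
  assumes sym: "\<forall>x y. E x y \<longrightarrow> E y x"
  shows "gdist V E x y = gdist V E y x"
proof -
  have swap: "gdist V E y x \<le> gdist V E x y" for x y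
  proof (cases "gdist V E x y")
    case (enat n)
    then have "has_walk V E n y x" using has_walk_sym[OF sym has_walk_gdist] by blast
    then show ?thesis using enat gdist_le_has_walk by simp
  qed simp
  show ?thesis using swap[of x y] swap[of y x] by (rule antisym)
qed

lemma shortest_walk_prefix_le:
  assumes "is_walk V E p L" "gdist V E (p 0) (p L) = enat L" "l \<le> L"
    and "has_walk V E n (p 0) (p l)"
  shows "l \<le> n"
proof -
  have "has_walk V E (n + (L - l)) (p 0) (p L)"
    using has_walk_append[OF assms(4) has_walk_subwalk[OF assms(1,3) order_refl]] .
  then have "gdist V E (p 0) (p L) \<le> enat (n + (L - l))" by (rule gdist_le_has_walk)
  then show ?thesis using assms(2,3) by simp
qed

lemma level_walk_le:
  assumes wd: "\<forall>v\<in>V. well_defined V E d err v" and "is_walk V E q n"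
  shows "d (q n) \<le> d (q 0) + n"
  using assms(2)
proof (induction n)
  case (Suc n)
  then have "is_walk V E q n" "E (q n) (q (Suc n))" "q n \<in> V" "q (Suc n) \<in> V"
    unfolding is_walk_def by auto
  moreover from this have "\<bar>int (d (q n)) - int (d (q (Suc n)))\<bar> \<le> 1"
    using wd unfolding well_defined_def nbhd_def by auto
  ultimately show ?case using Suc.IH by linarith
qed simp

lemma has_walk_to_leader:
  assumes wd: "\<forall>v\<in>V. well_defined V E d err v" and "v \<in> V"
  shows "\<exists>t\<in>leaders V d. has_walk V E (d v) v t"
  using assms(2)
proof (induction "d v" arbitrary: v)
  case 0
  then have "has_walk V E 0 v v" unfolding has_walk_def is_walk_def by auto
  moreover have "v \<in> leaders V d" using 0 unfolding leaders_def by simp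
  ultimately show ?case using 0 by auto
next
  case (Suc n)
  then have "d v > 0" by simp
  then obtain w where "w \<in> nbhd V E v" "d w = d v - 1"
    using wd Suc.prems unfolding well_defined_def by blast
  then have w: "w \<in> V" "E v w" "d w = n" using Suc.hyps(2) unfolding nbhd_def by auto
  then obtain t where t: "t \<in> leaders V d" "has_walk V E n w t" using Suc.hyps(1) by blast
  have "has_walk V E 1 v w" using has_walk_edge[of E v w V] w Suc.prems by blast
  then have "has_walk V E (1 + n) v t" using t(2) by (rule has_walk_append)
  then have "has_walk V E (d v) v t" using Suc.hyps(2) by simp
  then show ?case using t(1) by blast
qed

lemma level_along_shortest_walk:
  assumes sym: "\<forall>x y. E x y \<longrightarrow> E y x" and wd: "\<forall>v\<in>V. well_defined V E d err v"
    and sep: "\<forall>t\<in>leaders V d. t \<noteq> s \<longrightarrow> enat k \<le> gdist V E s t"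
    and p: "is_walk V E p L" "p 0 = s" "gdist V E s (p L) = enat L"
    and "s \<in> leaders V d" "2 * L < k" "l \<le> L"
  shows "d (p l) = l"
proof -
  have "d s = 0" using \<open>s \<in> leaders V d\<close> unfolding leaders_def by simp
  moreover have "is_walk V E p l" using p(1) \<open>l \<le> L\<close> unfolding is_walk_def by auto
  ultimately have upper: "d (p l) \<le> l" using level_walk_le[OF wd \<open>is_walk V E p l\<close>] p(2) by simp
  have "p l \<in> V" using p \<open>l \<le> L\<close> unfolding is_walk_def by auto
  then obtain t where t: "t \<in> leaders V d" "has_walk V E (d (p l)) (p l) t"
    using has_walk_to_leader[OF wd] by blast
  have "l \<le> d (p l)"
  proof (cases "t = s")
    case True
    then have "has_walk V E (d (p l)) (p 0) (p l)" using has_walk_sym[OF sym t(2)] p by simp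
    moreover have "gdist V E (p 0) (p L) = enat L" using p(2,3) by simp
    ultimately show ?thesis using shortest_walk_prefix_le[OF p(1) _ \<open>l \<le> L\<close>] by blast
  next
    case False
    have "has_walk V E (l + d (p l)) s t"
      using has_walk_append[OF has_walk_subwalk[OF p(1) le0 \<open>l \<le> L\<close>] t(2)] p by simp
    have "enat k \<le> gdist V E s t" using sep t(1) False by blast
    also have "\<dots> \<le> enat (l + d (p l))"
      using \<open>has_walk V E (l + d (p l)) s t\<close> by (rule gdist_le_has_walk)
    finally show ?thesis using upper \<open>2 * L < k\<close> \<open>l \<le> L\<close> by simp
  qed
  then show ?thesis using upper by simp
qed

lemma arrows_switch_once:
  fixes \<beta> :: "nat \<Rightarrow> arrow" and \<gamma> :: "nat \<Rightarrow> 'a :: {group_add, one}"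
  assumes "\<beta> 0 = Down" "\<gamma> 0 = c"
    and step: "\<And>l. l < n \<Longrightarrow> (\<beta> (Suc l), \<beta> l, \<gamma> l) \<in>
      {(Up, Up, \<gamma> (Suc l)), (Up, Down, \<gamma> (Suc l)), (Up, Down, \<gamma> (Suc l) + 1), (Down, Down, \<gamma> (Suc l))}"
  shows "\<exists>a\<le>n. (\<forall>l\<le>a. \<beta> l = Down \<and> \<gamma> l = c) \<and>
           (\<exists>c'\<in>{c - 1, c}. \<forall>l\<in>{a+1..n}. \<beta> l = Up \<and> \<gamma> l = c')"
  using step
proof (induction n)
  case 0
  show ?case using assms(1,2) by (intro exI[of _ 0]) auto
next
  case (Suc n)
  then obtain a c' where a: "a \<le> n" "\<forall>l\<le>a. \<beta> l = Down \<and> \<gamma> l = c"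
    and c': "c' \<in> {c - 1, c}" "\<forall>l\<in>{a+1..n}. \<beta> l = Up \<and> \<gamma> l = c'"
    by (metis less_SucI)
  have st: "(\<beta> (Suc n), \<beta> n, \<gamma> n) \<in>
      {(Up, Up, \<gamma> (Suc n)), (Up, Down, \<gamma> (Suc n)), (Up, Down, \<gamma> (Suc n) + 1), (Down, Down, \<gamma> (Suc n))}"
    by (rule Suc.prems) simp
  show ?case
  proof (cases "a = n")
    case True
    then have "\<beta> n = Down" "\<gamma> n = c" using a by auto
    show ?thesis
    proof (cases "\<beta> (Suc n)")
      case Up
      then have "\<gamma> (Suc n) \<in> {c - 1, c}"
        using st \<open>\<beta> n = Down\<close> \<open>\<gamma> n = c\<close> by (auto simp: eq_diff_eq)
      then show ?thesis using a True Up
        by (intro exI[of _ n]) (auto intro!: bexI[of _ "\<gamma> (Suc n)"] simp: le_Suc_eq)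
    next
      case Down
      then have "\<gamma> (Suc n) = c" using st \<open>\<beta> n = Down\<close> \<open>\<gamma> n = c\<close> by auto
      then show ?thesis using a True Down by (intro exI[of _ "Suc n"]) (auto simp: le_Suc_eq)
    qed
  next
    case False
    then have "\<beta> n = Up" "\<gamma> n = c'" using a c' by auto
    then have "\<beta> (Suc n) = Up" "\<gamma> (Suc n) = c'" using st by auto
    then have "\<forall>l\<in>{a+1..Suc n}. \<beta> l = Up \<and> \<gamma> l = c'"
      using c'(2) by (auto simp: le_Suc_eq)
    then show ?thesis using a c'(1) le_SucI by blast
  qed
qed

lemma branch_coherence_parent:
  assumes "branch_coherence V E m d c b v" "d v < i" "i \<le> m - 1"
    and "w \<in> nbhd V E v" "d w + 1 = d v"
  shows "(b i v, b i w, c i w) \<in> {(Up, Up, c i v), (Up, Down, c i v), (Up, Down, c i v + 1),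
                                  (Down, Down, c i v)}"
proof -
  have "i \<in> {d v + 1..m - 1}" "\<not> m \<le> d v" using assms(2,3) by auto
  then have "bc_up V E d c b v i" using assms(1) unfolding branch_coherence_def by blast
  moreover have "int (d w) = int (d v) - 1" using assms(5) by linarith
  ultimately show ?thesis using assms(4) unfolding bc_up_def by blast
qed

lemma branch_coherence_along_walk:
  assumes sym: "\<forall>x y. E x y \<longrightarrow> E y x" and coh: "\<forall>v\<in>V. branch_coherence V E m d c b v"
    and p: "is_walk V E p n" "\<forall>l\<le>n. d (p l) = l"
    and "n < i" "i \<le> m - 1" "l < n"
  shows "(b i (p (Suc l)), b i (p l), c i (p l)) \<in> {(Up, Up, c i (p (Suc l))),
      (Up, Down, c i (p (Suc l))), (Up, Down, c i (p (Suc l)) + 1), (Down, Down, c i (p (Suc l)))}"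
proof (rule branch_coherence_parent)
  have "p l \<in> V" "p (Suc l) \<in> V" "E (p l) (p (Suc l))"
    using p(1) \<open>l < n\<close> unfolding is_walk_def by auto
  then show "p l \<in> nbhd V E (p (Suc l))" "branch_coherence V E m d c b (p (Suc l))"
    using sym coh unfolding nbhd_def by auto
  show "d (p l) + 1 = d (p (Suc l))" "d (p (Suc l)) < i"
    using p(2) \<open>l < n\<close> \<open>n < i\<close> by auto
qed fact

theorem lemma3:
  fixes V :: "'v set" and E :: "'v \<Rightarrow> 'v \<Rightarrow> bool" and k :: nat
    and d :: "'v \<Rightarrow> nat" and err :: "'v \<Rightarrow> bool"
    and c :: "nat \<Rightarrow> 'v \<Rightarrow> 4" and b :: "nat \<Rightarrow> 'v \<Rightarrow> arrow"
    and s u :: 'v and p :: "nat \<Rightarrow> 'v" and L :: nat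
  assumes "undirected_graph V E"
    and "k > 2"
    and "legitimate V E k d err c b"
    and "s \<in> leaders V d"
    and "u \<in> V"
    and "gdist V E u s \<le> enat (k div 2 - 1)"
    and "is_walk V E p L" and "p 0 = s" and "p L = u" and "gdist V E s u = enat L"
  shows "\<forall>i\<in>{d u + 1..k div 2 - 1}. \<exists>a\<le>d u.
           (\<forall>l\<le>a. b i (p l) = Down \<and> c i (p l) = c i s) \<and>
           (\<exists>c'\<in>{c i s - 1, c i s}. \<forall>l\<in>{a+1..d u}. b i (p l) = Up \<and> c i (p l) = c')"
proof
  fix i assume i: "i \<in> {d u + 1..k div 2 - 1}"
  have sym: "\<forall>x y. E x y \<longrightarrow> E y x" using assms(1) unfolding undirected_graph_def by auto
  have leg: "\<forall>v\<in>V. well_defined V E d err v \<and> leader_down (k div 2) d b v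
               \<and> branch_coherence V E (k div 2) d c b v"
    and sep: "\<forall>t\<in>leaders V d. t \<noteq> s \<longrightarrow> enat k \<le> gdist V E s t"
    using assms(3,4) unfolding legitimate_def by auto
  have "L \<le> k div 2 - 1" using assms(6,10) gdist_sym[OF sym, of V u s] by simp
  then have "2 * L < k" using \<open>k > 2\<close> by linarith
  have wd: "\<forall>v\<in>V. well_defined V E d err v" using leg by auto
  have level: "\<forall>l\<le>L. d (p l) = l"
    using level_along_shortest_walk[OF sym wd sep assms(7,8) _ assms(4) \<open>2 * L < k\<close>] assms(9,10)
    by simp
  then have "d u = L" using assms(9) by auto
  have "b i s = Down"
    using leg assms(4) i unfolding leaders_def leader_down_def by auto
  moreover have "\<forall>v\<in>V. branch_coherence V E (k div 2) d c b v" using leg by auto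
  note step = branch_coherence_along_walk[OF sym this assms(7) level]
  ultimately show "\<exists>a\<le>d u. (\<forall>l\<le>a. b i (p l) = Down \<and> c i (p l) = c i s) \<and>
      (\<exists>c'\<in>{c i s - 1, c i s}. \<forall>l\<in>{a+1..d u}. b i (p l) = Up \<and> c i (p l) = c')"
    using arrows_switch_once[of "\<lambda>l. b i (p l)" "\<lambda>l. c i (p l)" "c i s" "d u"] assms(8)
      step i \<open>d u = L\<close> by simp
qed

end
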